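(* Let $\alpha\in(\tfrac12,1)$, $0<\eta_0<\frac1{2\lambda_\Sigma}$, $\eta_t=\eta_0t^{-\alpha}$. For every positive definite $Y\in\mathbb R^{d\times d}$, letting $X\succeq0$ be the solution of $\eta_0(AX+XA^\top)=Y$, one has $$T^{-\alpha}\sum_{t=1}^T\Big(\prod_{k=t}^T(I-\eta_kA)\Big)Y\Big(\prod_{k=t}^T(I-\eta_kA)\Big)^\top-X=O(T^{\alpha-1})\,Y,$$ in the matrix big-$O$ sense.
   Context: $\mathcal S$ is a finite state space, $\gamma\in[0,1)$, $P(\cdot\mid s)$ a Markov transition kernel on $\mathcal S$ with stationary distribution $\mu$, and $\phi:\mathcal S\to\mathbb R^d$ a feature map with $\|\phi(s)\|_2\le1$. $A=\mathbb E_{s\sim\mu,s'\sim P(\cdot\mid s)}[\phi(s)(\phi(s)-\gamma\phi(s'))^\top]$, $\Sigma=\mathbb E_{s\sim\mu}[\phi(s)\phi(s)^\top]$, $\lambda_0=\lambda_{\min}(\Sigma)>0$, $\lambda_\Sigma=\lambda_{\max}(\Sigma)$. Matrix big-$O$ notation: for matrices $F_T$, a scalar sequence $f_T$ and a fixed positive semidefinite matrix $M$, $F_T=O(f_T)M$ means there is a constant $\tilde C$ independent of $T$ and $M$ with $\|F_T\|\le\tilde Cf_T\|M\|$ and $\mathrm{Tr}(F_T)\le\tilde Cf_T\mathrm{Tr}(M)$ for all $T$ ($\|\cdot\|$ the spectral norm). *)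

theory Defs
  imports "HOL-Analysis.Analysis"
begin

type_synonym 'd mat = "real^'d^'d"

definition outer :: "real^'d \<Rightarrow> real^'d \<Rightarrow> ('d::finite) mat" where
  "outer u v = (\<chi> i j. u $ i * v $ j)"

definition eigenvalues :: "('d::finite) mat \<Rightarrow> real set" where
  "eigenvalues M = {l. \<exists>v. v \<noteq> 0 \<and> M *v v = l *\<^sub>R v}"

definition lambda_min :: "('d::finite) mat \<Rightarrow> real" where
  "lambda_min M = Min (eigenvalues M)"

definition lambda_max :: "('d::finite) mat \<Rightarrow> real" where
  "lambda_max M = Max (eigenvalues M)"

definition spec_norm :: "('d::finite) mat \<Rightarrow> real" where
  "spec_norm M = onorm (\<lambda>x. M *v x)"

definition pos_semidef :: "('d::finite) mat \<Rightarrow> bool" where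
  "pos_semidef M \<longleftrightarrow> transpose M = M \<and> (\<forall>x. 0 \<le> x \<bullet> (M *v x))"

definition pos_def :: "('d::finite) mat \<Rightarrow> bool" where
  "pos_def M \<longleftrightarrow> transpose M = M \<and> (\<forall>x. x \<noteq> 0 \<longrightarrow> 0 < x \<bullet> (M *v x))"

text \<open>Ordered product  M t ** M (t+1) ** ... ** M T  (identity if t > T).\<close>
definition mat_prod_range :: "(nat \<Rightarrow> ('d::finite) mat) \<Rightarrow> nat \<Rightarrow> nat \<Rightarrow> ('d::finite) mat" where
  "mat_prod_range M t T = foldr (\<lambda>k N. M k ** N) [t..<Suc T] (mat 1)"

definition markov_kernel :: "('s::finite \<Rightarrow> 's \<Rightarrow> real) \<Rightarrow> bool" where
  "markov_kernel P \<longleftrightarrow> (\<forall>s s'. 0 \<le> P s s') \<and> (\<forall>s. (\<Sum>s'\<in>UNIV. P s s') = 1)"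

definition stationary_dist :: "('s::finite \<Rightarrow> 's \<Rightarrow> real) \<Rightarrow> ('s \<Rightarrow> real) \<Rightarrow> bool" where
  "stationary_dist P \<mu> \<longleftrightarrow> (\<forall>s. 0 \<le> \<mu> s) \<and> (\<Sum>s\<in>UNIV. \<mu> s) = 1
     \<and> (\<forall>s'. (\<Sum>s\<in>UNIV. \<mu> s * P s s') = \<mu> s')"

definition TD_A :: "('s::finite \<Rightarrow> 's \<Rightarrow> real) \<Rightarrow> ('s \<Rightarrow> real) \<Rightarrow> real \<Rightarrow> ('s \<Rightarrow> real^('d::finite)) \<Rightarrow> ('d::finite) mat" where
  "TD_A P \<mu> \<gamma> \<phi> = (\<Sum>s\<in>UNIV. \<Sum>s'\<in>UNIV. (\<mu> s * P s s') *\<^sub>R outer (\<phi> s) (\<phi> s - \<gamma> *\<^sub>R \<phi> s'))"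

definition TD_Sigma :: "('s::finite \<Rightarrow> real) \<Rightarrow> ('s \<Rightarrow> real^('d::finite)) \<Rightarrow> ('d::finite) mat" where
  "TD_Sigma \<mu> \<phi> = (\<Sum>s\<in>UNIV. \<mu> s *\<^sub>R outer (\<phi> s) (\<phi> s))"

end

theory Submission
  imports Defs
begin

text \<open>Write \<open>M\<^sub>k = I - \<eta>\<^sub>k A\<close> and \<open>S\<^sub>T = \<Sum>\<^sub>t Q\<^sub>t Y Q\<^sub>t\<^sup>T\<close>. Since the \<open>M\<^sub>k\<close> commute,
  \<open>S\<^sub>T\<^sub>+\<^sub>1 = M\<^sub>T\<^sub>+\<^sub>1 (S\<^sub>T + Y) M\<^sub>T\<^sub>+\<^sub>1\<^sup>T\<close>. Comparing with \<open>T\<^sup>\<alpha> X\<close>, the Lyapunov equation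
  \<open>\<eta>\<^sub>0 (A X + X A\<^sup>T) = Y\<close> cancels the first-order terms, so the deviation
  \<open>D\<^sub>T = S\<^sub>T - T\<^sup>\<alpha> X\<close> obeys
  \<open>\<parallel>D\<^sub>T\<^sub>+\<^sub>1\<parallel> \<le> (1 - 2 \<eta>\<^sub>T\<^sub>+\<^sub>1 m + \<eta>\<^sub>T\<^sub>+\<^sub>1\<^sup>2 \<parallel>A\<parallel>\<^sup>2) \<parallel>D\<^sub>T\<parallel> + K \<parallel>Y\<parallel> T\<^sup>\<alpha>\<^sup>-\<^sup>1\<close>,
  where \<open>m > 0\<close> is a coercivity constant of \<open>A\<close> (stationarity gives \<open>x\<^sup>T A x \<ge> (1 - \<gamma>) x\<^sup>T \<Sigma> x\<close>)
  and \<open>\<parallel>X\<parallel> = O(\<parallel>Y\<parallel>)\<close>. The contraction factor is eventually below \<open>1 - c T\<^sup>-\<^sup>\<alpha>\<close>, and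
  this recursion yields \<open>\<parallel>D\<^sub>T\<parallel> = O(T\<^sup>2\<^sup>\<alpha>\<^sup>-\<^sup>1) \<parallel>Y\<parallel>\<close>, i.e.
  \<open>\<parallel>T\<^sup>-\<^sup>\<alpha> S\<^sub>T - X\<parallel> = O(T\<^sup>\<alpha>\<^sup>-\<^sup>1) \<parallel>Y\<parallel>\<close>. The trace bound follows from
  \<open>tr F \<le> d \<parallel>F\<parallel>\<close> and \<open>\<parallel>Y\<parallel> \<le> d\<^sup>2 tr Y\<close> for \<open>Y \<succeq> 0\<close>.\<close>

section \<open>Spectral norm\<close>

lemma spec_norm_apply: "norm (M *v x) \<le> spec_norm M * norm x"
  unfolding spec_norm_def by (rule onorm) (rule matrix_vector_mul_bounded_linear)

lemma spec_norm_le: "(\<And>x. norm (M *v x) \<le> c * norm x) \<Longrightarrow> spec_norm M \<le> c"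
  unfolding spec_norm_def by (rule onorm_le)

lemma spec_norm_nonneg: "0 \<le> spec_norm M"
  unfolding spec_norm_def by (rule onorm_pos_le) (rule matrix_vector_mul_bounded_linear)

lemma spec_norm_zero: "spec_norm (0::real^'n^'n) = 0"
  using spec_norm_le[of "0::real^'n^'n" 0] spec_norm_nonneg[of "0::real^'n^'n"] by simp

lemma spec_norm_add: "spec_norm (A + B) \<le> spec_norm A + spec_norm B"
  unfolding spec_norm_def matrix_vector_mult_add_rdistrib
  by (intro onorm_triangle matrix_vector_mul_bounded_linear)

lemma spec_norm_uminus: "spec_norm (- A) = spec_norm A"
proof -
  have "(\<lambda>x. (- A) *v x) = (\<lambda>x. - (A *v x))"
    by (simp add: fun_eq_iff vec_eq_iff matrix_vector_mult_def sum_negf)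
  then show ?thesis unfolding spec_norm_def by (simp add: onorm_neg)
qed

lemma spec_norm_diff: "spec_norm (A - B) \<le> spec_norm A + spec_norm B"
  using spec_norm_add[of A "- B"] by (simp add: spec_norm_uminus)

lemma spec_norm_scaleR: "spec_norm (c *\<^sub>R A) = \<bar>c\<bar> * spec_norm A"
  unfolding spec_norm_def scaleR_matrix_vector_assoc[symmetric]
  by (intro onorm_scaleR matrix_vector_mul_bounded_linear)

lemma spec_norm_mult: "spec_norm (A ** B) \<le> spec_norm A * spec_norm B"
proof -
  have "(\<lambda>x. (A ** B) *v x) = (\<lambda>x. A *v x) \<circ> (\<lambda>x. B *v x)"
    by (simp add: o_def matrix_vector_mul_assoc)
  then show ?thesis
    unfolding spec_norm_def by (simp add: onorm_compose matrix_vector_mul_bounded_linear)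
qed

lemma inner_transpose: "x \<bullet> (transpose M *v y) = (M *v x) \<bullet> (y::real^'n)"
  by (simp add: dot_lmul_matrix[symmetric] inner_commute)

lemma spec_norm_transpose_le: "spec_norm (transpose M) \<le> spec_norm (M::real^'n^'n)"
proof (rule spec_norm_le)
  fix x :: "real^'n"
  let ?y = "transpose M *v x"
  have "norm ?y ^ 2 = ?y \<bullet> (transpose M *v x)"
    by (simp add: power2_norm_eq_inner)
  also have "\<dots> = (M *v ?y) \<bullet> x"
    by (rule inner_transpose)
  also have "\<dots> \<le> norm (M *v ?y) * norm x"
    by (rule order_trans[OF abs_ge_self Cauchy_Schwarz_ineq2])
  also have "\<dots> \<le> spec_norm M * norm ?y * norm x"
    by (intro mult_right_mono spec_norm_apply norm_ge_zero)
  finally show "norm ?y \<le> spec_norm M * norm x"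
    by (cases "?y = 0") (simp_all add: power2_eq_square mult_ac spec_norm_nonneg)
qed

lemma spec_norm_transpose: "spec_norm (transpose M) = spec_norm M"
  using spec_norm_transpose_le[of M] spec_norm_transpose_le[of "transpose M"] by simp

section \<open>Quadratic forms and positive semidefinite matrices\<close>

lemma pos_def_imp_pos_semidef: "pos_def M \<Longrightarrow> pos_semidef M"
  unfolding pos_def_def pos_semidef_def by (metis inner_zero_left less_eq_real_def)

lemma symmetric_quadratic_form_swap:
  "transpose M = M \<Longrightarrow> u \<bullet> (M *v v) = v \<bullet> (M *v (u::real^'n))"
  by (metis inner_commute inner_transpose)

lemma quadratic_form_add:
  "(u + v) \<bullet> (M *v (u + v)) = u \<bullet> (M *v u) + u \<bullet> (M *v v) + v \<bullet> (M *v u) + v \<bullet> (M *v (v::real^'n))"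
  by (simp add: matrix_vector_right_distrib inner_add_left inner_add_right)

lemma quadratic_form_axis: "axis i 1 \<bullet> (M *v axis j (1::real)) = M $ i $ j"
proof -
  have "M *v axis j 1 = (\<chi> k. M $ k $ j)"
    by (simp add: matrix_vector_mult_def axis_def vec_eq_iff if_distrib sum.If_cases cong: if_cong)
  then show ?thesis by (simp add: inner_axis')
qed

lemma pos_semidef_diag_nonneg: "pos_semidef M \<Longrightarrow> 0 \<le> M $ i $ i"
  unfolding pos_semidef_def by (metis quadratic_form_axis)

lemma pos_semidef_entry_bound:
  assumes "pos_semidef M"
  shows "\<bar>M $ i $ j\<bar> \<le> (M $ i $ i + M $ j $ j) / 2"
proof -
  have sym: "M $ j $ i = M $ i $ j"
    using assms unfolding pos_semidef_def by (metis transpose_def vec_lambda_beta)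
  have form: "0 \<le> (axis i 1 + c *\<^sub>R axis j 1) \<bullet> (M *v (axis i 1 + c *\<^sub>R axis j (1::real)))" for c
    using assms unfolding pos_semidef_def by blast
  have "0 \<le> M$i$i + 2 * c * M$i$j + c^2 * M$j$j" for c
    using form[of c] unfolding quadratic_form_add
    by (simp add: matrix_vector_mult_scaleR quadratic_form_axis sym power2_eq_square algebra_simps)
  from this[of 1] this[of "-1"] show ?thesis by (simp add: abs_le_iff)
qed

lemma nonneg_quadratic_imp_linear_coeff_zero:
  fixes b c :: real
  assumes nonneg: "\<And>t. 0 \<le> t * b + t^2 * c"
  shows "b = 0"
proof (rule ccontr)
  assume "b \<noteq> 0"
  define k where "k = \<bar>c\<bar> + 1"
  have k: "0 < k" "c < k" unfolding k_def by auto
  have "(- b / k) * b + (- b / k)^2 * c = b^2 * (c - k) / k^2"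
    using k by (simp add: field_simps power2_eq_square)
  also have "\<dots> < 0"
    using \<open>b \<noteq> 0\<close> k by (intro divide_neg_pos mult_pos_neg) auto
  finally show False using nonneg[of "- b / k"] by linarith
qed

lemma pos_semidef_kernel:
  assumes psd: "pos_semidef M" and zero: "v \<bullet> (M *v v) = 0"
  shows "M *v v = 0"
proof -
  let ?w = "M *v v"
  have "0 \<le> t * (2 * (?w \<bullet> ?w)) + t^2 * (?w \<bullet> (M *v ?w))" for t
  proof -
    have "0 \<le> (v + t *\<^sub>R ?w) \<bullet> (M *v (v + t *\<^sub>R ?w))"
      using psd unfolding pos_semidef_def by blast
    also have "\<dots> = t * (2 * (?w \<bullet> ?w)) + t^2 * (?w \<bullet> (M *v ?w))"
      using zero symmetric_quadratic_form_swap[of M v ?w] psd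
      unfolding quadratic_form_add pos_semidef_def
      by (simp add: matrix_vector_mult_scaleR inner_commute power2_eq_square algebra_simps)
    finally show ?thesis .
  qed
  then have "2 * (?w \<bullet> ?w) = 0" by (rule nonneg_quadratic_imp_linear_coeff_zero)
  then show ?thesis by simp
qed

lemma quadratic_form_max:
  fixes M :: "real^'n^'n"
  shows "\<exists>v. norm v = 1 \<and> (\<forall>x. x \<bullet> (M *v x) \<le> (v \<bullet> (M *v v)) * norm x ^ 2)"
proof -
  have cont: "continuous_on (sphere 0 1) (\<lambda>x::real^'n. x \<bullet> (M *v x))"
    by (intro continuous_intros)
  have "sphere (0::real^'n) 1 \<noteq> {}"
    using norm_axis_1 by (metis mem_sphere_0 empty_iff)
  then obtain v where "v \<in> sphere 0 1" and "\<forall>y \<in> sphere 0 1. y \<bullet> (M *v y) \<le> v \<bullet> (M *v v)"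
    using continuous_attains_sup[OF compact_sphere _ cont] by blast
  then have v: "norm v = 1" and max: "\<And>y. norm y = 1 \<Longrightarrow> y \<bullet> (M *v y) \<le> v \<bullet> (M *v v)"
    by auto
  have "x \<bullet> (M *v x) \<le> (v \<bullet> (M *v v)) * norm x ^ 2" for x
  proof (cases "x = 0")
    case False
    have "(x \<bullet> (M *v x)) / norm x ^ 2 = ((1 / norm x) *\<^sub>R x) \<bullet> (M *v ((1 / norm x) *\<^sub>R x))"
      by (simp add: matrix_vector_mult_scaleR power2_eq_square)
    also have "\<dots> \<le> v \<bullet> (M *v v)"
      using False by (intro max) simp
    finally show ?thesis using False by (simp add: pos_divide_le_eq)
  qed simp
  with v show ?thesis by blast
qed

lemma quadratic_form_min:
  fixes M :: "real^'n^'n"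
  shows "\<exists>v. norm v = 1 \<and> (\<forall>x. (v \<bullet> (M *v v)) * norm x ^ 2 \<le> x \<bullet> (M *v x))"
proof -
  have neg: "(- M) *v y = - (M *v y)" for y
    by (simp add: vec_eq_iff matrix_vector_mult_def sum_negf)
  show ?thesis using quadratic_form_max[of "- M"] unfolding neg by auto
qed

lemma eigenvalues_finite:
  assumes sym: "transpose M = M"
  shows "finite (eigenvalues M)"
proof -
  define v where "v l = (SOME v. v \<noteq> 0 \<and> M *v v = l *\<^sub>R v)" for l
  have v: "v l \<noteq> 0 \<and> M *v v l = l *\<^sub>R v l" if "l \<in> eigenvalues M" for l
    using that unfolding eigenvalues_def v_def by (metis (mono_tags, lifting) mem_Collect_eq someI_ex)
  have inj: "inj_on v (eigenvalues M)"
  proof (rule inj_onI)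
    fix l1 l2 assume l: "l1 \<in> eigenvalues M" "l2 \<in> eigenvalues M" "v l1 = v l2"
    then have "l1 *\<^sub>R v l1 = l2 *\<^sub>R v l1" using v by metis
    then show "l1 = l2" using v[OF l(1)] by (simp add: scaleR_cancel_right)
  qed
  have "pairwise orthogonal (v ` eigenvalues M)"
  proof (clarsimp simp: pairwise_def)
    fix l1 l2 assume l: "l1 \<in> eigenvalues M" "l2 \<in> eigenvalues M" "v l1 \<noteq> v l2"
    have "l1 * (v l1 \<bullet> v l2) = v l2 \<bullet> (M *v v l1)"
      using v[OF l(1)] by (simp add: inner_commute)
    also have "\<dots> = v l1 \<bullet> (M *v v l2)"
      using sym by (rule symmetric_quadratic_form_swap)
    also have "\<dots> = l2 * (v l1 \<bullet> v l2)"
      using v[OF l(2)] by simp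
    finally have "(l1 - l2) * (v l1 \<bullet> v l2) = 0" by (simp add: algebra_simps)
    then show "orthogonal (v l1) (v l2)"
      using l(3) by (auto simp: orthogonal_def)
  qed
  then have "finite (v ` eigenvalues M)" by (rule pairwise_orthogonal_imp_finite)
  then show ?thesis using inj by (rule finite_imageD)
qed

lemma pos_semidef_spec_norm_le:
  fixes M :: "real^'n^'n"
  assumes "pos_semidef M" and "\<And>i. M $ i $ i \<le> c"
  shows "spec_norm M \<le> real CARD('n) ^ 2 * c"
proof -
  have "\<bar>M $ i $ j\<bar> \<le> c" for i j
  proof -
    have "(M $ i $ i + M $ j $ j) / 2 \<le> c" using add_mono[OF assms(2)[of i] assms(2)[of j]] by simp
    with pos_semidef_entry_bound[OF assms(1)] show ?thesis by (rule order_trans)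
  qed
  then show ?thesis
    unfolding spec_norm_def power2_eq_square by (rule onorm_le_matrix_component)
qed

lemma trace_le_card_spec_norm: "trace F \<le> real CARD('n) * spec_norm (F::real^'n^'n)"
proof -
  have "trace F \<le> (\<Sum>i\<in>UNIV. \<bar>F $ i $ i\<bar>)"
    unfolding trace_def by (intro sum_mono) auto
  also have "\<dots> \<le> (\<Sum>i\<in>(UNIV::'n set). spec_norm F)"
    unfolding spec_norm_def by (intro sum_mono matrix_component_le_onorm)
  finally show ?thesis by simp
qed

lemma pos_semidef_spec_norm_le_trace:
  fixes M :: "real^'n^'n"
  assumes "pos_semidef M"
  shows "spec_norm M \<le> real CARD('n) ^ 2 * trace M"
proof (rule pos_semidef_spec_norm_le[OF assms])
  fix i
  show "M $ i $ i \<le> trace M"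
    unfolding trace_def using pos_semidef_diag_nonneg[OF assms] by (intro member_le_sum) auto
qed

lemma trace_le_of_spec_norm_le:
  fixes F Y :: "real^'n^'n"
  assumes Y: "pos_semidef Y" and "0 \<le> b" and F: "spec_norm F \<le> b * spec_norm Y"
  shows "trace F \<le> real CARD('n) ^ 3 * b * trace Y"
proof -
  have "trace F \<le> real CARD('n) * (b * spec_norm Y)"
    using trace_le_card_spec_norm[of F] F by (meson mult_left_mono of_nat_0_le_iff order_trans)
  also have "\<dots> \<le> real CARD('n) * (b * (real CARD('n) ^ 2 * trace Y))"
    using pos_semidef_spec_norm_le_trace[OF Y] \<open>0 \<le> b\<close> by (intro mult_left_mono) auto
  finally show ?thesis by (simp add: power3_eq_cube power2_eq_square mult_ac)
qed

section \<open>Coercivity of the TD matrix\<close>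

lemma outer_mult_vec: "outer u v *v x = (v \<bullet> x) *\<^sub>R u"
  by (simp add: vec_eq_iff matrix_vector_mult_def outer_def inner_vec_def sum_distrib_left sum_distrib_right mult_ac)

lemma sum_matrix_vector_mult: "(\<Sum>i\<in>S. f i) *v x = (\<Sum>i\<in>S. f i *v x)"
  by (induct S rule: infinite_finite_induct) (simp_all add: matrix_vector_mult_add_rdistrib)

lemma TD_Sigma_mult_vec: "TD_Sigma \<mu> \<phi> *v x = (\<Sum>s\<in>UNIV. (\<mu> s * (\<phi> s \<bullet> x)) *\<^sub>R \<phi> s)"
  unfolding TD_Sigma_def sum_matrix_vector_mult
  by (simp add: scaleR_matrix_vector_assoc[symmetric] outer_mult_vec)

lemma TD_Sigma_quadratic_form: "x \<bullet> (TD_Sigma \<mu> \<phi> *v x) = (\<Sum>s\<in>UNIV. \<mu> s * (\<phi> s \<bullet> x)^2)"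
  unfolding TD_Sigma_mult_vec by (simp add: inner_sum_right power2_eq_square inner_commute mult_ac)

lemma TD_A_quadratic_form: "x \<bullet> (TD_A P \<mu> \<gamma> \<phi> *v x) =
   (\<Sum>s\<in>UNIV. \<Sum>s'\<in>UNIV. \<mu> s * P s s' * ((\<phi> s \<bullet> x) - \<gamma> * (\<phi> s' \<bullet> x)) * (\<phi> s \<bullet> x))"
  unfolding TD_A_def sum_matrix_vector_mult
  by (simp add: scaleR_matrix_vector_assoc[symmetric] outer_mult_vec inner_sum_right
      inner_diff_left inner_diff_right inner_commute mult_ac)

lemma TD_Sigma_symmetric: "transpose (TD_Sigma \<mu> \<phi>) = TD_Sigma \<mu> \<phi>"
  by (simp add: vec_eq_iff transpose_def TD_Sigma_def outer_def mult_ac)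

lemma stationary_expectation:
  fixes P :: "'s::finite \<Rightarrow> 's \<Rightarrow> real"
  assumes "markov_kernel P" "stationary_dist P \<mu>"
  shows "(\<Sum>s\<in>UNIV. \<Sum>s'\<in>UNIV. \<mu> s * P s s' * f s) = (\<Sum>s\<in>UNIV. \<mu> s * f s)"
    and "(\<Sum>s\<in>UNIV. \<Sum>s'\<in>UNIV. \<mu> s * P s s' * f s') = (\<Sum>s\<in>UNIV. \<mu> s * f s)"
proof -
  have "(\<Sum>s'\<in>UNIV. \<mu> s * P s s' * f s) = \<mu> s * f s" for s
    using assms(1) unfolding markov_kernel_def by (simp add: sum_distrib_left[symmetric] sum_distrib_right[symmetric] mult_ac)
  then show "(\<Sum>s\<in>UNIV. \<Sum>s'\<in>UNIV. \<mu> s * P s s' * f s) = (\<Sum>s\<in>UNIV. \<mu> s * f s)" by simp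
  have "(\<Sum>s\<in>UNIV. \<Sum>s'\<in>UNIV. \<mu> s * P s s' * f s') = (\<Sum>s'\<in>UNIV. (\<Sum>s\<in>UNIV. \<mu> s * P s s') * f s')"
    by (subst sum.swap) (simp add: sum_distrib_right)
  then show "(\<Sum>s\<in>UNIV. \<Sum>s'\<in>UNIV. \<mu> s * P s s' * f s') = (\<Sum>s\<in>UNIV. \<mu> s * f s)"
    using assms(2) unfolding stationary_dist_def by simp
qed

lemma stationary_cross_moment_le:
  fixes P :: "'s::finite \<Rightarrow> 's \<Rightarrow> real"
  assumes mk: "markov_kernel P" and st: "stationary_dist P \<mu>"
  shows "(\<Sum>s\<in>UNIV. \<Sum>s'\<in>UNIV. \<mu> s * P s s' * (a s * a s')) \<le> (\<Sum>s\<in>UNIV. \<mu> s * a s ^ 2)"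
proof -
  have "(\<Sum>s\<in>UNIV. \<Sum>s'\<in>UNIV. \<mu> s * P s s' * (a s * a s'))
     \<le> (\<Sum>s\<in>UNIV. \<Sum>s'\<in>UNIV. \<mu> s * P s s' * a s ^ 2 / 2 + \<mu> s * P s s' * a s' ^ 2 / 2)"
  proof (intro sum_mono)
    fix s s'
    have "0 \<le> \<mu> s * P s s'"
      using mk st unfolding markov_kernel_def stationary_dist_def by simp
    moreover have "a s * a s' \<le> a s ^ 2 / 2 + a s' ^ 2 / 2"
      using sum_squares_bound[of "a s" "a s'"] by (simp add: power2_eq_square)
    ultimately have "\<mu> s * P s s' * (a s * a s') \<le> \<mu> s * P s s' * (a s ^ 2 / 2 + a s' ^ 2 / 2)"
      by (rule mult_left_mono[rotated])
    then show "\<mu> s * P s s' * (a s * a s') \<le> \<mu> s * P s s' * a s ^ 2 / 2 + \<mu> s * P s s' * a s' ^ 2 / 2"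
      by (simp add: distrib_left)
  qed
  also have "\<dots> = (\<Sum>s\<in>UNIV. \<mu> s * a s ^ 2)"
    using stationary_expectation[OF mk st, of "\<lambda>s. a s ^ 2"]
    by (simp add: sum.distrib sum_divide_distrib[symmetric])
  finally show ?thesis .
qed

lemma TD_quadratic_form_ge:
  fixes P :: "'s::finite \<Rightarrow> 's \<Rightarrow> real"
  assumes mk: "markov_kernel P" and st: "stationary_dist P \<mu>" and "0 \<le> \<gamma>"
  shows "(1 - \<gamma>) * (x \<bullet> (TD_Sigma \<mu> \<phi> *v x)) \<le> x \<bullet> (TD_A P \<mu> \<gamma> \<phi> *v x)"
proof -
  define a where "a s = \<phi> s \<bullet> x" for s
  have "x \<bullet> (TD_A P \<mu> \<gamma> \<phi> *v x)
      = (\<Sum>s\<in>UNIV. \<Sum>s'\<in>UNIV. \<mu> s * P s s' * a s ^ 2) - \<gamma> * (\<Sum>s\<in>UNIV. \<Sum>s'\<in>UNIV. \<mu> s * P s s' * (a s * a s'))"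
    unfolding TD_A_quadratic_form a_def
    by (simp add: sum_subtractf sum_distrib_left power2_eq_square algebra_simps)
  also have "\<dots> \<ge> (\<Sum>s\<in>UNIV. \<mu> s * a s ^ 2) - \<gamma> * (\<Sum>s\<in>UNIV. \<mu> s * a s ^ 2)"
    using stationary_cross_moment_le[OF mk st, of a] stationary_expectation(1)[OF mk st, of "\<lambda>s. a s ^ 2"] \<open>0 \<le> \<gamma>\<close>
    by (simp add: mult_left_mono)
  finally show ?thesis
    unfolding TD_Sigma_quadratic_form a_def by (simp add: algebra_simps)
qed

lemma TD_Sigma_quadratic_form_pos:
  fixes \<phi> :: "'s::finite \<Rightarrow> real^'d"
  assumes st: "stationary_dist P \<mu>" and pos: "lambda_min (TD_Sigma \<mu> \<phi>) > 0" and "x \<noteq> 0"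
  shows "0 < x \<bullet> (TD_Sigma \<mu> \<phi> *v x)"
proof (rule ccontr)
  assume "\<not> 0 < x \<bullet> (TD_Sigma \<mu> \<phi> *v x)"
  moreover have nonneg: "\<forall>s\<in>UNIV. 0 \<le> \<mu> s * (\<phi> s \<bullet> x)^2"
    using st unfolding stationary_dist_def by simp
  ultimately have "(\<Sum>s\<in>UNIV. \<mu> s * (\<phi> s \<bullet> x)^2) = 0"
    unfolding TD_Sigma_quadratic_form using sum_nonneg[of UNIV] by (meson order.antisym not_less)
  then have "\<forall>s\<in>UNIV. \<mu> s * (\<phi> s \<bullet> x)^2 = 0"
    using nonneg by (simp add: sum_nonneg_eq_0_iff)
  then have zero: "\<mu> s * (\<phi> s \<bullet> x) = 0" for s
    by (simp add: power2_eq_square)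
  have "TD_Sigma \<mu> \<phi> *v x = 0 *\<^sub>R x"
    unfolding TD_Sigma_mult_vec zero by simp
  then have "0 \<in> eigenvalues (TD_Sigma \<mu> \<phi>)"
    unfolding eigenvalues_def using \<open>x \<noteq> 0\<close> by blast
  then have "lambda_min (TD_Sigma \<mu> \<phi>) \<le> 0"
    unfolding lambda_min_def using eigenvalues_finite[OF TD_Sigma_symmetric] by (rule Min_le[rotated])
  then show False using pos by simp
qed

lemma TD_A_coercive:
  fixes \<phi> :: "'s::finite \<Rightarrow> real^'d"
  assumes "0 \<le> \<gamma>" "\<gamma> < 1" "markov_kernel P" "stationary_dist P \<mu>"
    and "lambda_min (TD_Sigma \<mu> \<phi>) > 0"
  shows "\<exists>m>0. \<forall>x. m * norm x ^ 2 \<le> x \<bullet> (TD_A P \<mu> \<gamma> \<phi> *v x)"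
proof -
  obtain v where v: "norm v = 1" "\<forall>x. (v \<bullet> (TD_A P \<mu> \<gamma> \<phi> *v v)) * norm x ^ 2 \<le> x \<bullet> (TD_A P \<mu> \<gamma> \<phi> *v x)"
    using quadratic_form_min by blast
  have "v \<noteq> 0" using v(1) by auto
  then have "0 < (1 - \<gamma>) * (v \<bullet> (TD_Sigma \<mu> \<phi> *v v))"
    using assms TD_Sigma_quadratic_form_pos[of P \<mu> \<phi> v] by simp
  also have "\<dots> \<le> v \<bullet> (TD_A P \<mu> \<gamma> \<phi> *v v)"
    using assms by (intro TD_quadratic_form_ge)
  finally show ?thesis using v(2) by blast
qed

section \<open>The Lyapunov equation\<close>

lemma quadratic_form_maximiser_eigenvector:
  fixes X :: "real^'n^'n"
  assumes sym: "transpose X = X" and "norm v = 1"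
    and max: "\<And>x. x \<bullet> (X *v x) \<le> (v \<bullet> (X *v v)) * norm x ^ 2"
  shows "X *v v = (v \<bullet> (X *v v)) *\<^sub>R v"
proof -
  define l where "l = v \<bullet> (X *v v)"
  have gap: "(l *\<^sub>R mat 1 - X) *v x = l *\<^sub>R x - X *v x" for x
    by (simp add: matrix_vector_mult_diff_rdistrib scaleR_matrix_vector_assoc[symmetric])
  have "pos_semidef (l *\<^sub>R mat 1 - X)"
    unfolding pos_semidef_def gap
    using sym max by (simp add: vec_eq_iff transpose_def inner_diff_right power2_norm_eq_inner l_def mat_def)
  moreover have "v \<bullet> ((l *\<^sub>R mat 1 - X) *v v) = 0"
    unfolding gap using \<open>norm v = 1\<close> by (simp add: inner_diff_right l_def power2_norm_eq_inner[symmetric])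
  ultimately have "(l *\<^sub>R mat 1 - X) *v v = 0" by (rule pos_semidef_kernel)
  then have "X *v v = l *\<^sub>R v" unfolding gap by simp
  then show ?thesis unfolding l_def .
qed

text \<open>The largest eigenvalue \<open>l\<close> of \<open>X\<close> is controlled by testing the Lyapunov equation
  against the corresponding unit eigenvector \<open>v\<close>: \<open>v\<^sup>T Y v = 2 e l v\<^sup>T A v \<ge> 2 e l m\<close>.\<close>
lemma lyapunov_solution_spec_norm_le:
  fixes A X Y :: "real^'n^'n"
  assumes coercive: "\<And>x. m * norm x ^ 2 \<le> x \<bullet> (A *v x)" and "m > 0" "e > 0"
    and psd: "pos_semidef X" and lyap: "e *\<^sub>R (A ** X + X ** transpose A) = Y"
  shows "spec_norm X \<le> real CARD('n) ^ 2 / (2 * e * m) * spec_norm Y"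
proof -
  have sym: "transpose X = X" using psd unfolding pos_semidef_def by simp
  obtain v where v: "norm v = 1" and max: "\<And>x. x \<bullet> (X *v x) \<le> (v \<bullet> (X *v v)) * norm x ^ 2"
    using quadratic_form_max by blast
  define l where "l = v \<bullet> (X *v v)"
  have eig: "X *v v = l *\<^sub>R v"
    unfolding l_def using sym v max by (rule quadratic_form_maximiser_eigenvector)
  have "v \<bullet> (Y *v v) = e * (v \<bullet> (A *v (X *v v)) + v \<bullet> (X *v (transpose A *v v)))"
    unfolding lyap[symmetric]
    by (simp add: scaleR_matrix_vector_assoc[symmetric] matrix_vector_mult_add_rdistrib
        matrix_vector_mul_assoc[symmetric] inner_add_right)
  also have "v \<bullet> (X *v (transpose A *v v)) = (X *v v) \<bullet> (transpose A *v v)"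
    using inner_transpose[of v X "transpose A *v v"] sym by simp
  also have "\<dots> = l * (v \<bullet> (A *v v))"
    unfolding eig using inner_transpose[of v A v] by (simp add: inner_commute)
  finally have Yv: "v \<bullet> (Y *v v) = 2 * e * l * (v \<bullet> (A *v v))"
    unfolding eig by (simp add: matrix_vector_mult_scaleR algebra_simps)
  have "0 \<le> l" unfolding l_def using psd unfolding pos_semidef_def by blast
  then have "2 * e * l * m \<le> 2 * e * l * (v \<bullet> (A *v v))"
    using coercive[of v] v \<open>e > 0\<close> by (intro mult_left_mono) auto
  also have "\<dots> \<le> norm v * norm (Y *v v)"
    unfolding Yv[symmetric] by (rule order_trans[OF abs_ge_self Cauchy_Schwarz_ineq2])
  also have "\<dots> \<le> spec_norm Y"
    using spec_norm_apply[of Y v] v by simp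
  finally have l: "l \<le> spec_norm Y / (2 * e * m)"
    using \<open>e > 0\<close> \<open>m > 0\<close> by (simp add: field_simps)
  have "X $ i $ i \<le> l" for i
    using max[of "axis i 1"] by (simp add: quadratic_form_axis l_def)
  with l have "X $ i $ i \<le> spec_norm Y / (2 * e * m)" for i
    by (meson order_trans)
  then have "spec_norm X \<le> real CARD('n) ^ 2 * (spec_norm Y / (2 * e * m))"
    by (rule pos_semidef_spec_norm_le[OF psd])
  then show ?thesis by simp
qed

section \<open>Gradient steps\<close>

lemma matrix_add_rdistrib: "(A + B) ** C = A ** C + B ** (C::'a::semiring_1^'n^'m)"
  by (vector matrix_matrix_mult_def sum.distrib[symmetric] field_simps)

lemma matrix_diff_ldistrib: "A ** (B - C) = A ** B - A ** (C::'a::ring_1^'n^'m)"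
  by (vector matrix_matrix_mult_def sum_subtractf[symmetric] field_simps)

lemma matrix_diff_rdistrib: "(A - B) ** C = A ** C - B ** (C::'a::ring_1^'n^'m)"
  by (vector matrix_matrix_mult_def sum_subtractf[symmetric] field_simps)

lemma matrix_scaleR_left: "(c *\<^sub>R A) ** B = c *\<^sub>R (A ** (B::real^'n^'m))"
  by (simp add: scalar_matrix_assoc)

lemma matrix_scaleR_right: "A ** (c *\<^sub>R B) = c *\<^sub>R (A ** (B::real^'n^'m))"
  by (simp add: matrix_scalar_ac scalar_matrix_assoc)

lemma matrix_sum_ldistrib: "A ** (\<Sum>i\<in>S. f i) = (\<Sum>i\<in>S. A ** f i)"
  by (induct S rule: infinite_finite_induct) (simp_all add: matrix_add_ldistrib)

lemma matrix_sum_rdistrib: "(\<Sum>i\<in>S. f i) ** A = (\<Sum>i\<in>S. f i ** A)"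
  by (induct S rule: infinite_finite_induct) (simp_all add: matrix_add_rdistrib)

lemma transpose_diff: "transpose (A - B) = transpose A - transpose (B::'a::ab_group_add^'n^'n)"
  by (simp add: vec_eq_iff transpose_def)

lemma gradient_step_commute:
  fixes A :: "real^'n^'n"
  shows "(mat 1 - a *\<^sub>R A) ** (mat 1 - b *\<^sub>R A) = (mat 1 - b *\<^sub>R A) ** (mat 1 - a *\<^sub>R A)"
  by (simp add: matrix_diff_ldistrib matrix_diff_rdistrib matrix_scaleR_left matrix_scaleR_right algebra_simps)

lemma mat_prod_range_self: "mat_prod_range M T T = M T"
  unfolding mat_prod_range_def by simp

lemma mat_prod_range_Suc:
  fixes M :: "nat \<Rightarrow> real^'n^'n"
  assumes "t \<le> Suc T"
  shows "mat_prod_range M t (Suc T) = mat_prod_range M t T ** M (Suc T)"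
proof -
  have foldr_mult: "foldr (\<lambda>k N. M k ** N) ks N0 = foldr (\<lambda>k N. M k ** N) ks (mat 1) ** N0" for ks N0
    by (induct ks) (simp_all add: matrix_mul_assoc)
  have "[t..<Suc (Suc T)] = [t..<Suc T] @ [Suc T]" using assms by simp
  then show ?thesis
    unfolding mat_prod_range_def by (simp del: upt_Suc add: foldr_mult[of "[t..<Suc T]" "M (Suc T)"])
qed

lemma mat_prod_range_commute:
  fixes M :: "nat \<Rightarrow> real^'n^'n"
  assumes "\<And>k. M k ** N = N ** M k"
  shows "mat_prod_range M t T ** N = N ** mat_prod_range M t T"
proof -
  have "foldr (\<lambda>k N. M k ** N) ks (mat 1) ** N = N ** foldr (\<lambda>k N. M k ** N) ks (mat 1)" for ks
    by (induct ks) (simp_all, metis assms matrix_mul_assoc)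
  then show ?thesis unfolding mat_prod_range_def by blast
qed

definition sandwich_sum :: "(nat \<Rightarrow> real^'n^'n) \<Rightarrow> real^'n^'n \<Rightarrow> nat \<Rightarrow> real^'n^'n" where
  "sandwich_sum M Y T = (\<Sum>t\<in>{1..T}. mat_prod_range M t T ** Y ** transpose (mat_prod_range M t T))"

lemma sandwich_sum_0: "sandwich_sum M Y 0 = 0"
  unfolding sandwich_sum_def by simp

lemma sandwich_sum_Suc:
  assumes commute: "\<And>j k. M j ** M k = M k ** M j"
  shows "sandwich_sum M Y (Suc T) = M (Suc T) ** (sandwich_sum M Y T + Y) ** transpose (M (Suc T))"
proof -
  let ?M = "M (Suc T)" and ?Q = "\<lambda>t. mat_prod_range M t T"
  have Q: "mat_prod_range M t (Suc T) = ?M ** ?Q t" if "t \<le> T" for t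
    using that mat_prod_range_Suc[of t T M] mat_prod_range_commute[of M ?M] commute by simp
  have "sandwich_sum M Y (Suc T)
      = (\<Sum>t\<in>{1..T}. ?M ** (?Q t ** Y ** transpose (?Q t)) ** transpose ?M) + ?M ** Y ** transpose ?M"
    unfolding sandwich_sum_def
    by (simp add: mat_prod_range_self Q matrix_transpose_mul matrix_mul_assoc)
  also have "(\<Sum>t\<in>{1..T}. ?M ** (?Q t ** Y ** transpose (?Q t)) ** transpose ?M)
      = ?M ** sandwich_sum M Y T ** transpose ?M"
    unfolding sandwich_sum_def by (simp add: matrix_sum_ldistrib matrix_sum_rdistrib)
  finally show ?thesis by (simp add: matrix_add_ldistrib matrix_add_rdistrib)
qed

lemma gradient_step_sandwich:
  fixes A Z :: "real^'n^'n"
  shows "(mat 1 - \<eta> *\<^sub>R A) ** Z ** transpose (mat 1 - \<eta> *\<^sub>R A)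
    = Z - \<eta> *\<^sub>R (A ** Z + Z ** transpose A) + \<eta>^2 *\<^sub>R (A ** Z ** transpose A)"
proof -
  have "(mat 1 - \<eta> *\<^sub>R A) ** Z ** (mat 1 - \<eta> *\<^sub>R transpose A)
     = (Z - \<eta> *\<^sub>R (A ** Z)) ** (mat 1 - \<eta> *\<^sub>R transpose A)"
    by (simp only: matrix_diff_rdistrib matrix_scaleR_left matrix_mul_lid)
  also have "\<dots> = Z - \<eta> *\<^sub>R (Z ** transpose A) - \<eta> *\<^sub>R (A ** Z) + (\<eta> * \<eta>) *\<^sub>R (A ** Z ** transpose A)"
    by (simp only: matrix_diff_rdistrib matrix_diff_ldistrib matrix_scaleR_left matrix_scaleR_right
        matrix_mul_rid matrix_mul_assoc scaleR_scaleR) (simp add: algebra_simps)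
  finally show ?thesis
    by (simp add: transpose_diff transpose_scalar power2_eq_square algebra_simps)
qed

lemma spec_norm_sq_le:
  fixes M :: "real^'n^'n"
  assumes "\<And>x. norm (M *v x) ^ 2 \<le> c * norm x ^ 2"
  shows "spec_norm M ^ 2 \<le> c"
proof -
  have "0 \<le> c" using assms[of "axis undefined 1"] by (metis norm_axis_1 power_one mult_1_right zero_le_power2 order_trans)
  have "norm (M *v x) \<le> sqrt c * norm x" for x
    using real_le_rsqrt[OF assms[of x]] by (simp add: real_sqrt_mult)
  then have "spec_norm M \<le> sqrt c" by (rule spec_norm_le)
  then show ?thesis
    using \<open>0 \<le> c\<close> spec_norm_nonneg[of M] by (metis power_mono real_sqrt_pow2)
qed

lemma gradient_step_spec_norm_sq:
  fixes A :: "real^'n^'n"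
  assumes coercive: "\<And>x. m * norm x ^ 2 \<le> x \<bullet> (A *v x)" and "0 \<le> \<eta>"
  shows "spec_norm (mat 1 - \<eta> *\<^sub>R A) ^ 2 \<le> 1 - 2 * \<eta> * m + \<eta>^2 * spec_norm A ^ 2"
proof (rule spec_norm_sq_le)
  fix x
  have step: "(mat 1 - \<eta> *\<^sub>R A) *v x = x - \<eta> *\<^sub>R (A *v x)"
    by (simp add: matrix_vector_mult_diff_rdistrib scaleR_matrix_vector_assoc[symmetric])
  have "norm ((mat 1 - \<eta> *\<^sub>R A) *v x) ^ 2 = norm x ^ 2 - 2 * \<eta> * (x \<bullet> (A *v x)) + \<eta>^2 * norm (A *v x) ^ 2"
    unfolding step power2_norm_eq_inner
    by (simp add: inner_diff_left inner_diff_right inner_commute[of "A *v x" x] power2_eq_square algebra_simps)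
  also have "\<dots> \<le> norm x ^ 2 - 2 * \<eta> * (m * norm x ^ 2) + \<eta>^2 * (spec_norm A * norm x) ^ 2"
    using coercive[of x] \<open>0 \<le> \<eta>\<close> spec_norm_apply[of A x]
    by (intro add_mono diff_mono order_refl mult_left_mono power_mono) auto
  also have "\<dots> = (1 - 2 * \<eta> * m + \<eta>^2 * spec_norm A ^ 2) * norm x ^ 2"
    by (simp add: power_mult_distrib algebra_simps)
  finally show "norm ((mat 1 - \<eta> *\<^sub>R A) *v x) ^ 2 \<le> (1 - 2 * \<eta> * m + \<eta>^2 * spec_norm A ^ 2) * norm x ^ 2" .
qed

lemma spec_norm_sandwich_le: "spec_norm (M ** D ** transpose M) \<le> spec_norm M ^ 2 * spec_norm (D::real^'n^'n)"
proof -
  have "spec_norm (M ** D ** transpose M) \<le> spec_norm (M ** D) * spec_norm M"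
    using spec_norm_mult[of "M ** D" "transpose M"] by (simp add: spec_norm_transpose)
  also have "\<dots> \<le> spec_norm M * spec_norm D * spec_norm M"
    by (intro mult_right_mono spec_norm_mult spec_norm_nonneg)
  finally show ?thesis by (simp add: power2_eq_square mult_ac)
qed

text \<open>Expanding the sandwich with the Lyapunov equation \<open>e (A X + X A\<^sup>T) = Y\<close>: the first-order
  term in \<open>X\<close> becomes a multiple of \<open>Y\<close>.\<close>
lemma lyapunov_sandwich_remainder:
  fixes A X Y :: "real^'n^'n"
  assumes lyap: "e *\<^sub>R (A ** X + X ** transpose A) = Y" and "e \<noteq> 0"
  shows "(mat 1 - \<eta> *\<^sub>R A) ** (s *\<^sub>R X + Y) ** transpose (mat 1 - \<eta> *\<^sub>R A) - s' *\<^sub>R X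
    = (s - s') *\<^sub>R X + (1 - \<eta> * s / e) *\<^sub>R Y - \<eta> *\<^sub>R (A ** Y + Y ** transpose A)
      + \<eta>^2 *\<^sub>R (A ** (s *\<^sub>R X + Y) ** transpose A)"
proof -
  have "A ** X + X ** transpose A = (1 / e) *\<^sub>R Y"
    using \<open>e \<noteq> 0\<close> by (simp add: lyap[symmetric])
  then have "A ** (s *\<^sub>R X + Y) + (s *\<^sub>R X + Y) ** transpose A = (s / e) *\<^sub>R Y + (A ** Y + Y ** transpose A)"
    by (simp add: matrix_add_ldistrib matrix_add_rdistrib matrix_scaleR_left matrix_scaleR_right
        scaleR_add_right[symmetric] algebra_simps)
  then show ?thesis
    unfolding gradient_step_sandwich by (simp add: algebra_simps scaleR_diff_left)
qed

lemma lyapunov_sandwich_remainder_bound: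
  fixes A X Y :: "real^'n^'n"
  assumes lyap: "e *\<^sub>R (A ** X + X ** transpose A) = Y" and "e \<noteq> 0" and "0 \<le> \<eta>" "0 \<le> s"
  shows "spec_norm ((mat 1 - \<eta> *\<^sub>R A) ** (s *\<^sub>R X + Y) ** transpose (mat 1 - \<eta> *\<^sub>R A) - s' *\<^sub>R X)
    \<le> \<bar>s - s'\<bar> * spec_norm X + \<bar>1 - \<eta> * s / e\<bar> * spec_norm Y + \<eta> * (2 * spec_norm A * spec_norm Y)
       + \<eta>^2 * s * spec_norm A ^ 2 * spec_norm X + \<eta>^2 * spec_norm A ^ 2 * spec_norm Y"
proof -
  let ?a = "spec_norm A"
  have sym_part: "spec_norm (A ** Y + Y ** transpose A) \<le> 2 * ?a * spec_norm Y"
    using spec_norm_add[of "A ** Y" "Y ** transpose A"] spec_norm_mult[of A Y]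
      spec_norm_mult[of Y "transpose A"] by (simp add: spec_norm_transpose mult_ac)
  have "spec_norm (A ** (s *\<^sub>R X + Y) ** transpose A) \<le> ?a ^ 2 * spec_norm (s *\<^sub>R X + Y)"
    by (rule spec_norm_sandwich_le)
  also have "\<dots> \<le> ?a ^ 2 * (s * spec_norm X + spec_norm Y)"
    using spec_norm_add[of "s *\<^sub>R X" Y] \<open>0 \<le> s\<close> by (intro mult_left_mono) (auto simp: spec_norm_scaleR)
  finally have second_order: "spec_norm (A ** (s *\<^sub>R X + Y) ** transpose A) \<le> ?a ^ 2 * (s * spec_norm X + spec_norm Y)" .
  let ?R1 = "(s - s') *\<^sub>R X" and ?R2 = "(1 - \<eta> * s / e) *\<^sub>R Y"
    and ?R3 = "\<eta> *\<^sub>R (A ** Y + Y ** transpose A)" and ?R4 = "\<eta>^2 *\<^sub>R (A ** (s *\<^sub>R X + Y) ** transpose A)"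
  have "spec_norm (?R1 + ?R2 - ?R3 + ?R4) \<le> spec_norm ?R1 + spec_norm ?R2 + spec_norm ?R3 + spec_norm ?R4"
    using spec_norm_add[of "?R1 + ?R2 - ?R3" ?R4] spec_norm_diff[of "?R1 + ?R2" ?R3] spec_norm_add[of ?R1 ?R2]
    by linarith
  also have "\<dots> = \<bar>s - s'\<bar> * spec_norm X + \<bar>1 - \<eta> * s / e\<bar> * spec_norm Y + \<eta> * spec_norm (A ** Y + Y ** transpose A)
       + \<eta>^2 * spec_norm (A ** (s *\<^sub>R X + Y) ** transpose A)"
    using \<open>0 \<le> \<eta>\<close> by (simp add: spec_norm_scaleR)
  also have "\<dots> \<le> \<bar>s - s'\<bar> * spec_norm X + \<bar>1 - \<eta> * s / e\<bar> * spec_norm Y + \<eta> * (2 * ?a * spec_norm Y)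
       + \<eta>^2 * (?a ^ 2 * (s * spec_norm X + spec_norm Y))"
    using sym_part second_order \<open>0 \<le> \<eta>\<close> by (intro add_mono mult_left_mono order_refl) auto
  finally show ?thesis
    unfolding lyapunov_sandwich_remainder[OF lyap \<open>e \<noteq> 0\<close>] by (simp add: algebra_simps)
qed

section \<open>The deviation recursion\<close>

lemma powr_succ_diff_le:
  fixes t \<alpha> :: real
  assumes "0 \<le> \<alpha>" "\<alpha> \<le> 1" "0 < t"
  shows "\<bar>t powr \<alpha> - (t + 1) powr \<alpha>\<bar> \<le> t powr (\<alpha> - 1)"
proof -
  have "t + 1 = t * (1 + 1 / t)" using assms by (simp add: field_simps)
  then have "(t + 1) powr \<alpha> = t powr \<alpha> * (1 + 1 / t) powr \<alpha>"
    using assms by (metis powr_mult less_imp_le add_nonneg_nonneg zero_le_one divide_nonneg_nonneg)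
  also have "\<dots> \<le> t powr \<alpha> * (1 + 1 / t)"
    using assms powr_mono[of \<alpha> 1 "1 + 1 / t"] by (intro mult_left_mono) auto
  also have "\<dots> = t powr \<alpha> + t powr (\<alpha> - 1)"
    using assms by (simp add: powr_diff field_simps)
  finally have "(t + 1) powr \<alpha> \<le> t powr \<alpha> + t powr (\<alpha> - 1)" .
  moreover have "t powr \<alpha> \<le> (t + 1) powr \<alpha>"
    using assms by (intro powr_mono2) auto
  ultimately show ?thesis by linarith
qed

lemma step_size_ratio_le:
  fixes t \<alpha> :: real
  assumes "0 \<le> \<alpha>" "\<alpha> \<le> 1" "1 \<le> t"
  shows "\<bar>1 - (t + 1) powr (- \<alpha>) * t powr \<alpha>\<bar> \<le> t powr (\<alpha> - 1)"
proof -
  define b where "b = t / (t + 1)"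
  have b: "0 < b" "b \<le> 1" unfolding b_def using assms by auto
  have ratio: "(t + 1) powr (- \<alpha>) * t powr \<alpha> = b powr \<alpha>"
    unfolding b_def using assms by (simp add: powr_divide powr_minus field_simps)
  have "b \<le> b powr \<alpha>" "b powr \<alpha> \<le> 1"
    using b assms powr_mono'[of \<alpha> 1 b] by (auto intro: powr_le1)
  then have "\<bar>1 - b powr \<alpha>\<bar> \<le> 1 - b" by linarith
  also have "\<dots> \<le> t powr (- 1)"
    unfolding b_def using assms by (simp add: powr_minus_divide field_simps)
  also have "\<dots> \<le> t powr (\<alpha> - 1)"
    using assms by (intro powr_mono) auto
  finally show ?thesis unfolding ratio .
qed

text \<open>The assumption \<open>\<alpha> \<ge> 1/2\<close> enters here: the step size must decay at least as fast as the
  error rate \<open>t\<^sup>\<alpha>\<^sup>-\<^sup>1\<close>.\<close>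
lemma step_size_le:
  fixes t \<alpha> :: real
  assumes "1/2 \<le> \<alpha>" "1 \<le> t"
  shows "(t + 1) powr (- \<alpha>) \<le> t powr (\<alpha> - 1)"
    and "((t + 1) powr (- \<alpha>))^2 * t powr \<alpha> \<le> t powr (\<alpha> - 1)"
proof -
  have decay: "(t + 1) powr (- \<alpha>) \<le> t powr (- \<alpha>)"
    using assms by (intro powr_mono2') auto
  also have rate: "t powr (- \<alpha>) \<le> t powr (\<alpha> - 1)"
    using assms by (intro powr_mono) auto
  finally show "(t + 1) powr (- \<alpha>) \<le> t powr (\<alpha> - 1)" .
  have "((t + 1) powr (- \<alpha>))^2 * t powr \<alpha> \<le> (t powr (- \<alpha>))^2 * t powr \<alpha>"
    using decay by (intro mult_right_mono power_mono) auto
  also have "\<dots> = t powr (- \<alpha>)"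
    using assms by (simp add: power2_eq_square powr_add[symmetric])
  finally show "((t + 1) powr (- \<alpha>))^2 * t powr \<alpha> \<le> t powr (\<alpha> - 1)"
    using rate by linarith
qed

text \<open>The rate \<open>T\<^sup>\<alpha>\<^sup>-\<^sup>1\<close>, with value \<open>1\<close> at \<open>T = 0\<close>, where \<open>0 powr (\<alpha> - 1) = 0\<close>.\<close>
definition poly_rate :: "real \<Rightarrow> nat \<Rightarrow> real" where
  "poly_rate \<alpha> T = (if T = 0 then 1 else real T powr (\<alpha> - 1))"

lemma poly_rate_nonneg: "0 \<le> poly_rate \<alpha> T"
  unfolding poly_rate_def by simp

lemma step_size_estimates:
  assumes "1/2 < \<alpha>" "\<alpha> < 1"
  shows "\<bar>real T powr \<alpha> - real (Suc T) powr \<alpha>\<bar> \<le> poly_rate \<alpha> T"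
    and "\<bar>1 - real (Suc T) powr (- \<alpha>) * real T powr \<alpha>\<bar> \<le> poly_rate \<alpha> T"
    and "real (Suc T) powr (- \<alpha>) \<le> poly_rate \<alpha> T"
    and "(real (Suc T) powr (- \<alpha>))^2 * real T powr \<alpha> \<le> poly_rate \<alpha> T"
    and "(real (Suc T) powr (- \<alpha>))^2 \<le> poly_rate \<alpha> T"
proof -
  have Suc: "real (Suc T) = real T + 1" by simp
  show "\<bar>real T powr \<alpha> - real (Suc T) powr \<alpha>\<bar> \<le> poly_rate \<alpha> T"
    using powr_succ_diff_le[of \<alpha> "real T"] assms unfolding Suc by (cases "T = 0") (auto simp: poly_rate_def)
  show "\<bar>1 - real (Suc T) powr (- \<alpha>) * real T powr \<alpha>\<bar> \<le> poly_rate \<alpha> T"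
    using step_size_ratio_le[of \<alpha> "real T"] assms unfolding Suc by (cases "T = 0") (auto simp: poly_rate_def)
  show "real (Suc T) powr (- \<alpha>) \<le> poly_rate \<alpha> T"
    using step_size_le(1)[of \<alpha> "real T"] assms unfolding Suc by (cases "T = 0") (auto simp: poly_rate_def)
  show sq: "(real (Suc T) powr (- \<alpha>))^2 * real T powr \<alpha> \<le> poly_rate \<alpha> T"
    using step_size_le(2)[of \<alpha> "real T"] assms unfolding Suc by (cases "T = 0") (auto simp: poly_rate_def)
  show "(real (Suc T) powr (- \<alpha>))^2 \<le> poly_rate \<alpha> T"
  proof (cases "T = 0")
    case False
    then have "1 \<le> real T powr \<alpha>"
      using assms by (intro ge_one_powr_ge_zero) auto
    then have "(real (Suc T) powr (- \<alpha>))^2 \<le> (real (Suc T) powr (- \<alpha>))^2 * real T powr \<alpha>"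
      by (simp add: mult_le_cancel_left1)
    with sq show ?thesis by linarith
  qed (simp add: poly_rate_def)
qed

lemma remainder_coefficient_bound:
  fixes a c r nX nY \<eta> \<eta>0 s d1 d2 :: real
  assumes "\<bar>d1\<bar> \<le> r" "\<bar>d2\<bar> \<le> r" "\<eta> \<le> \<eta>0 * r" "\<eta>^2 * s \<le> \<eta>0^2 * r" "\<eta>^2 \<le> \<eta>0^2 * r"
    and "0 \<le> nX" "nX \<le> c * nY" "0 \<le> nY" "0 \<le> a" "0 \<le> r"
  shows "\<bar>d1\<bar> * nX + \<bar>d2\<bar> * nY + \<eta> * (2 * a * nY) + \<eta>^2 * s * a^2 * nX + \<eta>^2 * a^2 * nY
    \<le> (c + 1 + 2 * a * \<eta>0 + \<eta>0^2 * a^2 * (c + 1)) * nY * r"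
proof -
  have "\<bar>d1\<bar> * nX \<le> r * (c * nY)"
    using assms by (intro mult_mono) auto
  moreover have "\<bar>d2\<bar> * nY \<le> r * nY"
    using assms by (intro mult_right_mono) auto
  moreover have "\<eta> * (2 * a * nY) \<le> (\<eta>0 * r) * (2 * a * nY)"
    using assms by (intro mult_right_mono) auto
  moreover have "(\<eta>^2 * s) * (a^2 * nX) \<le> (\<eta>0^2 * r) * (a^2 * (c * nY))"
    using assms by (intro mult_mono[OF _ mult_left_mono]) auto
  moreover have "\<eta>^2 * (a^2 * nY) \<le> (\<eta>0^2 * r) * (a^2 * nY)"
    using assms by (intro mult_right_mono) auto
  moreover have "r * (c * nY) + r * nY + (\<eta>0 * r) * (2 * a * nY) + (\<eta>0^2 * r) * (a^2 * (c * nY))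
      + (\<eta>0^2 * r) * (a^2 * nY) = (c + 1 + 2 * a * \<eta>0 + \<eta>0^2 * a^2 * (c + 1)) * nY * r"
    by (simp add: algebra_simps)
  ultimately show ?thesis by (simp add: mult_ac)
qed

lemma sandwich_deviation_step:
  fixes A X Y :: "real^'n^'n" and T :: nat
  assumes coercive: "\<And>x. m * norm x ^ 2 \<le> x \<bullet> (A *v x)" and "0 < \<eta>0"
    and lyap: "\<eta>0 *\<^sub>R (A ** X + X ** transpose A) = Y"
    and X: "spec_norm X \<le> c * spec_norm Y" and \<alpha>: "1/2 < \<alpha>" "\<alpha> < 1"
  defines "M \<equiv> \<lambda>k. mat 1 - (\<eta>0 * real k powr (- \<alpha>)) *\<^sub>R A"
    and "\<eta> \<equiv> \<eta>0 * real (Suc T) powr (- \<alpha>)"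
    and "a \<equiv> spec_norm A"
  shows "spec_norm (sandwich_sum M Y (Suc T) - real (Suc T) powr \<alpha> *\<^sub>R X)
    \<le> (1 - 2 * \<eta> * m + \<eta>^2 * a^2) * spec_norm (sandwich_sum M Y T - real T powr \<alpha> *\<^sub>R X)
       + (c + 1 + 2 * a * \<eta>0 + \<eta>0^2 * a^2 * (c + 1)) * spec_norm Y * poly_rate \<alpha> T"
proof -
  define s where "s = real T powr \<alpha>"
  define s' where "s' = real (Suc T) powr \<alpha>"
  define D where "D = sandwich_sum M Y T - s *\<^sub>R X"
  define r where "r = poly_rate \<alpha> T"
  have "0 \<le> \<eta>" "0 \<le> s" "0 \<le> r" unfolding \<eta>_def s_def r_def using \<open>0 < \<eta>0\<close> poly_rate_nonneg by auto
  have "sandwich_sum M Y (Suc T) = M (Suc T) ** (D + (s *\<^sub>R X + Y)) ** transpose (M (Suc T))"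
    unfolding D_def M_def by (simp add: sandwich_sum_Suc gradient_step_commute)
  then have split: "sandwich_sum M Y (Suc T) - s' *\<^sub>R X = M (Suc T) ** D ** transpose (M (Suc T))
      + (M (Suc T) ** (s *\<^sub>R X + Y) ** transpose (M (Suc T)) - s' *\<^sub>R X)"
    by (simp add: matrix_add_ldistrib matrix_add_rdistrib)
  have M: "M (Suc T) = mat 1 - \<eta> *\<^sub>R A" unfolding M_def \<eta>_def ..
  have "spec_norm (M (Suc T) ** D ** transpose (M (Suc T))) \<le> spec_norm (M (Suc T)) ^ 2 * spec_norm D"
    by (rule spec_norm_sandwich_le)
  also have "\<dots> \<le> (1 - 2 * \<eta> * m + \<eta>^2 * a^2) * spec_norm D"
    unfolding M a_def using gradient_step_spec_norm_sq[OF coercive \<open>0 \<le> \<eta>\<close>]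
    by (rule mult_right_mono) (rule spec_norm_nonneg)
  finally have contraction: "spec_norm (M (Suc T) ** D ** transpose (M (Suc T)))
      \<le> (1 - 2 * \<eta> * m + \<eta>^2 * a^2) * spec_norm D" .
  have "\<eta> * s / \<eta>0 = real (Suc T) powr (- \<alpha>) * real T powr \<alpha>"
    unfolding \<eta>_def s_def using \<open>0 < \<eta>0\<close> by simp
  moreover have "\<eta>^2 * s = \<eta>0^2 * ((real (Suc T) powr (- \<alpha>))^2 * real T powr \<alpha>)"
    "\<eta>^2 = \<eta>0^2 * (real (Suc T) powr (- \<alpha>))^2"
    unfolding \<eta>_def s_def by (simp_all add: power_mult_distrib)
  ultimately have "\<bar>s - s'\<bar> \<le> r" "\<bar>1 - \<eta> * s / \<eta>0\<bar> \<le> r" "\<eta> \<le> \<eta>0 * r"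
    "\<eta>^2 * s \<le> \<eta>0^2 * r" "\<eta>^2 \<le> \<eta>0^2 * r"
    using step_size_estimates[OF \<alpha>, of T] \<open>0 < \<eta>0\<close>
    unfolding r_def s_def s'_def \<eta>_def by (simp_all add: mult_left_mono)
  then have remainder: "spec_norm (M (Suc T) ** (s *\<^sub>R X + Y) ** transpose (M (Suc T)) - s' *\<^sub>R X)
      \<le> (c + 1 + 2 * a * \<eta>0 + \<eta>0^2 * a^2 * (c + 1)) * spec_norm Y * r"
    unfolding M a_def using \<open>0 < \<eta>0\<close> \<open>0 \<le> \<eta>\<close> \<open>0 \<le> s\<close> \<open>0 \<le> r\<close> X
    by (intro order_trans[OF lyapunov_sandwich_remainder_bound[OF lyap] remainder_coefficient_bound])
      (auto simp: spec_norm_nonneg)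
  have "spec_norm (sandwich_sum M Y (Suc T) - s' *\<^sub>R X)
      \<le> (1 - 2 * \<eta> * m + \<eta>^2 * a^2) * spec_norm D + (c + 1 + 2 * a * \<eta>0 + \<eta>0^2 * a^2 * (c + 1)) * spec_norm Y * r"
    unfolding split using spec_norm_add contraction remainder by (rule order_trans[OF _ add_mono])
  then show ?thesis unfolding D_def s_def s'_def r_def .
qed

section \<open>Solving the recursion\<close>

lemma linear_recursion_comparison:
  fixes d w q g :: "nat \<Rightarrow> real"
  assumes "d 0 \<le> 0" "w 0 = 0" "\<And>T. 0 \<le> q T" "0 \<le> K"
    and "\<And>T. d (Suc T) \<le> q T * d T + K * g T" "\<And>T. w (Suc T) = q T * w T + g T"
  shows "d T \<le> K * w T"
proof (induct T)
  case (Suc T)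
  have "d (Suc T) \<le> q T * d T + K * g T" by (rule assms(5))
  also have "\<dots> \<le> q T * (K * w T) + K * g T"
    using Suc assms(3,4) by (intro add_mono mult_left_mono) auto
  finally show ?case by (simp add: assms(6) algebra_simps)
qed (use assms in simp)

text \<open>The gain \<open>c B (T+1)\<^sup>-\<^sup>\<alpha> T\<^sup>2\<^sup>\<alpha>\<^sup>-\<^sup>1 \<ge> c B T\<^sup>\<alpha>\<^sup>-\<^sup>1 / 2\<close> from the contraction absorbs the
  forcing term \<open>T\<^sup>\<alpha>\<^sup>-\<^sup>1\<close> as soon as \<open>c B \<ge> 2\<close>.\<close>
lemma poly_recursion_step:
  fixes \<alpha> c B w q :: real and T :: nat
  assumes "1/2 \<le> \<alpha>" "\<alpha> \<le> 1" "1 \<le> T" "2 \<le> c * B" "0 \<le> B"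
    and "0 \<le> q" "q \<le> 1 - c * real (Suc T) powr (- \<alpha>)"
    and "w \<le> B * real T powr (2 * \<alpha> - 1)"
  shows "q * w + real T powr (\<alpha> - 1) \<le> B * real (Suc T) powr (2 * \<alpha> - 1)"
proof -
  define t where "t = real T"
  have t: "1 \<le> t" "real (Suc T) = t + 1" unfolding t_def using assms by auto
  define u where "u = (t + 1) powr (- \<alpha>)"
  have half: "1/2 \<le> u * t powr \<alpha>"
  proof -
    define b where "b = t / (t + 1)"
    have "u * t powr \<alpha> = b powr \<alpha>"
      unfolding u_def b_def using t by (simp add: powr_divide powr_minus field_simps)
    moreover have "b powr 1 \<le> b powr \<alpha>"
      using assms t unfolding b_def by (intro powr_mono') auto
    then have "b \<le> b powr \<alpha>"
      unfolding b_def using t by simp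
    moreover have "1/2 \<le> b"
      unfolding b_def using t by (simp add: field_simps)
    ultimately show ?thesis by linarith
  qed
  have split: "t powr (2 * \<alpha> - 1) = t powr (\<alpha> - 1) * t powr \<alpha>"
    by (simp add: powr_add[symmetric])
  have "q * w \<le> q * (B * t powr (2 * \<alpha> - 1))"
    using assms unfolding t_def by (intro mult_left_mono) auto
  also have "\<dots> \<le> (1 - c * u) * (B * t powr (2 * \<alpha> - 1))"
    using assms t unfolding u_def by (intro mult_right_mono) (auto simp: add.commute)
  finally have "q * w \<le> (1 - c * u) * (B * t powr (2 * \<alpha> - 1))" .
  moreover have "t powr (\<alpha> - 1) \<le> (c * B) * (u * t powr \<alpha>) * t powr (\<alpha> - 1)"
  proof -
    have "1 \<le> (c * B) * (u * t powr \<alpha>)"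
      using mult_mono[OF assms(4) half] assms by simp
    then show ?thesis
      using mult_right_mono[of 1 "(c * B) * (u * t powr \<alpha>)" "t powr (\<alpha> - 1)"] by simp
  qed
  moreover have "B * t powr (2 * \<alpha> - 1) \<le> B * (t + 1) powr (2 * \<alpha> - 1)"
    using assms t by (intro mult_left_mono powr_mono2) auto
  ultimately show ?thesis
    unfolding t(2) split t_def[symmetric] by (simp add: algebra_simps)
qed

lemma poly_recursion_bound:
  fixes w q :: "nat \<Rightarrow> real"
  assumes \<alpha>: "1/2 < \<alpha>" "\<alpha> < 1" and "0 < c" and q: "\<And>T. 0 \<le> q T"
    and contraction: "\<forall>\<^sub>F T in sequentially. q T \<le> 1 - c * real (Suc T) powr (- \<alpha>)"
    and rec: "\<And>T. w (Suc T) = q T * w T + poly_rate \<alpha> T"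
  shows "\<exists>B\<ge>0. \<forall>T\<ge>1. w T \<le> B * real T powr (2 * \<alpha> - 1)"
proof -
  obtain T0 where T0: "\<And>T. T0 \<le> T \<Longrightarrow> q T \<le> 1 - c * real (Suc T) powr (- \<alpha>)"
    using contraction unfolding eventually_sequentially by blast
  define T1 where "T1 = max T0 1"
  define B where "B = 2 / c + (\<Sum>T\<in>{1..T1}. \<bar>w T\<bar> / real T powr (2 * \<alpha> - 1))"
  have sum_nonneg: "0 \<le> (\<Sum>T\<in>{1..T1}. \<bar>w T\<bar> / real T powr (2 * \<alpha> - 1))"
    by (intro sum_nonneg) auto
  have "0 \<le> B" unfolding B_def using \<open>0 < c\<close> sum_nonneg by simp
  have "2 \<le> c * B" unfolding B_def using \<open>0 < c\<close> sum_nonneg by (simp add: distrib_left)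
  have initial: "w T \<le> B * real T powr (2 * \<alpha> - 1)" if "1 \<le> T" "T \<le> T1" for T
  proof -
    have "\<bar>w T\<bar> / real T powr (2 * \<alpha> - 1) \<le> (\<Sum>T\<in>{1..T1}. \<bar>w T\<bar> / real T powr (2 * \<alpha> - 1))"
      using that by (intro member_le_sum) auto
    then have "\<bar>w T\<bar> / real T powr (2 * \<alpha> - 1) \<le> B"
      unfolding B_def using \<open>0 < c\<close> by (smt (verit) divide_pos_pos)
    then show ?thesis
      using that by (simp add: pos_divide_le_eq)
  qed
  have later: "w T \<le> B * real T powr (2 * \<alpha> - 1)" if "T1 \<le> T" for T
    using that
  proof (induct T rule: nat_induct_at_least)
    case base
    show ?case using initial[of T1] unfolding T1_def by simp
  next
    case (Suc T)
    then have "1 \<le> T" "T0 \<le> T" unfolding T1_def by auto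
    then show ?case
      using poly_recursion_step[of \<alpha> T c B "q T" "w T"] \<alpha> \<open>2 \<le> c * B\<close> \<open>0 \<le> B\<close> q T0 Suc(2)
      by (simp add: rec poly_rate_def)
  qed
  have "w T \<le> B * real T powr (2 * \<alpha> - 1)" if "1 \<le> T" for T
    using initial later that by (cases "T \<le> T1") auto
  with \<open>0 \<le> B\<close> show ?thesis by blast
qed

lemma gradient_step_contraction_eventually:
  fixes \<eta>0 m a \<alpha> :: real
  assumes "0 \<le> \<eta>0" "0 < m" "0 < \<alpha>"
  shows "\<forall>\<^sub>F T in sequentially.
    1 - 2 * (\<eta>0 * real (Suc T) powr (- \<alpha>)) * m + (\<eta>0 * real (Suc T) powr (- \<alpha>))^2 * a^2
      \<le> 1 - \<eta>0 * m * real (Suc T) powr (- \<alpha>)"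
proof -
  have "(\<lambda>T. real T powr (- \<alpha>)) \<longlonglongrightarrow> 0"
    using assms by (intro tendsto_neg_powr filterlim_real_sequentially) auto
  then have "(\<lambda>T. \<eta>0 * real (Suc T) powr (- \<alpha>) * a^2) \<longlonglongrightarrow> 0"
    by (intro tendsto_mult_left_zero tendsto_mult_right_zero LIMSEQ_Suc)
  then have "\<forall>\<^sub>F T in sequentially. \<eta>0 * real (Suc T) powr (- \<alpha>) * a^2 < m"
    using \<open>0 < m\<close> by (rule order_tendstoD(2))
  then show ?thesis
  proof (rule eventually_mono)
    fix T
    define u where "u = \<eta>0 * real (Suc T) powr (- \<alpha>)"
    assume "\<eta>0 * real (Suc T) powr (- \<alpha>) * a^2 < m"
    then have "u * (u * a^2) \<le> u * m"
      using \<open>0 \<le> \<eta>0\<close> unfolding u_def by (intro mult_left_mono) auto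
    then show "1 - 2 * u * m + u^2 * a^2 \<le> 1 - \<eta>0 * m * real (Suc T) powr (- \<alpha>)"
      unfolding u_def by (simp add: power2_eq_square algebra_simps)
  qed
qed

lemma lyapunov_sandwich_sum_deviation_bound:
  fixes A :: "real^'n^'n"
  assumes coercive: "\<And>x. m * norm x ^ 2 \<le> x \<bullet> (A *v x)" and "0 < m" "0 < \<eta>0"
    and \<alpha>: "1/2 < \<alpha>" "\<alpha> < 1"
  defines "M \<equiv> \<lambda>k. mat 1 - (\<eta>0 * real k powr (- \<alpha>)) *\<^sub>R A"
  shows "\<exists>B\<ge>0. \<forall>X Y T. pos_semidef X \<longrightarrow> \<eta>0 *\<^sub>R (A ** X + X ** transpose A) = Y \<longrightarrow> 1 \<le> T \<longrightarrow>
    spec_norm (real T powr (- \<alpha>) *\<^sub>R sandwich_sum M Y T - X) \<le> B * real T powr (\<alpha> - 1) * spec_norm Y"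
proof -
  define a where "a = spec_norm A"
  define c where "c = real CARD('n) ^ 2 / (2 * \<eta>0 * m)"
  define K where "K = c + 1 + 2 * a * \<eta>0 + \<eta>0^2 * a^2 * (c + 1)"
  define q where "q T = 1 - 2 * (\<eta>0 * real (Suc T) powr (- \<alpha>)) * m + (\<eta>0 * real (Suc T) powr (- \<alpha>))^2 * a^2" for T
  define w where "w = rec_nat 0 (\<lambda>T x. q T * x + poly_rate \<alpha> T)"
  have q_nonneg: "0 \<le> q T" for T
    using gradient_step_spec_norm_sq[OF coercive, of "\<eta>0 * real (Suc T) powr (- \<alpha>)"] \<open>0 < \<eta>0\<close>
    unfolding q_def a_def by (smt (verit) zero_le_power2 zero_le_mult_iff powr_ge_zero)
  have "0 \<le> K"
    unfolding K_def c_def a_def using \<open>0 < \<eta>0\<close> \<open>0 < m\<close> spec_norm_nonneg[of A] by simp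
  obtain B where "0 \<le> B" and w: "\<And>T. 1 \<le> T \<Longrightarrow> w T \<le> B * real T powr (2 * \<alpha> - 1)"
    using poly_recursion_bound[OF \<alpha>, of "\<eta>0 * m" q w] q_nonneg \<open>0 < \<eta>0\<close> \<open>0 < m\<close> \<alpha>
      gradient_step_contraction_eventually[of \<eta>0 m \<alpha> a]
    unfolding q_def w_def by auto
  have "spec_norm (real T powr (- \<alpha>) *\<^sub>R sandwich_sum M Y T - X) \<le> K * B * real T powr (\<alpha> - 1) * spec_norm Y"
    if X: "pos_semidef X" and lyap: "\<eta>0 *\<^sub>R (A ** X + X ** transpose A) = Y" and "1 \<le> T" for X Y T
  proof -
    define d where "d T' = spec_norm (sandwich_sum M Y T' - real T' powr \<alpha> *\<^sub>R X)" for T'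
    have "spec_norm X \<le> c * spec_norm Y"
      unfolding c_def using lyapunov_solution_spec_norm_le[OF coercive \<open>0 < m\<close> \<open>0 < \<eta>0\<close> X lyap] by simp
    then have "d (Suc T') \<le> q T' * d T' + (K * spec_norm Y) * poly_rate \<alpha> T'" for T'
      unfolding d_def q_def K_def M_def a_def
      using sandwich_deviation_step[OF coercive \<open>0 < \<eta>0\<close> lyap _ \<alpha>] by (simp add: mult.assoc)
    then have "d T \<le> (K * spec_norm Y) * w T"
      using q_nonneg \<open>0 \<le> K\<close> spec_norm_nonneg[of Y]
      by (intro linear_recursion_comparison[where d = d and w = w and q = q and g = "poly_rate \<alpha>"])
        (simp_all add: d_def w_def sandwich_sum_0 spec_norm_zero)
    also have "\<dots> \<le> (K * spec_norm Y) * (B * real T powr (2 * \<alpha> - 1))"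
      using w[OF \<open>1 \<le> T\<close>] \<open>0 \<le> K\<close> spec_norm_nonneg[of Y] by (intro mult_left_mono) auto
    finally have dT: "d T \<le> (K * spec_norm Y) * (B * real T powr (2 * \<alpha> - 1))" .
    have "real T powr (- \<alpha>) *\<^sub>R sandwich_sum M Y T - X
        = real T powr (- \<alpha>) *\<^sub>R (sandwich_sum M Y T - real T powr \<alpha> *\<^sub>R X)"
      using \<open>1 \<le> T\<close> by (simp add: scaleR_diff_right powr_minus)
    then have "spec_norm (real T powr (- \<alpha>) *\<^sub>R sandwich_sum M Y T - X) = real T powr (- \<alpha>) * d T"
      unfolding d_def by (simp add: spec_norm_scaleR)
    also have "\<dots> \<le> real T powr (- \<alpha>) * ((K * spec_norm Y) * (B * real T powr (2 * \<alpha> - 1)))"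
      using dT by (intro mult_left_mono) auto
    also have "\<dots> = K * B * real T powr (\<alpha> - 1) * spec_norm Y"
      by (simp add: powr_add[symmetric] mult_ac)
    finally show ?thesis .
  qed
  moreover have "0 \<le> K * B" using \<open>0 \<le> K\<close> \<open>0 \<le> B\<close> by simp
  ultimately show ?thesis by blast
qed

theorem mainTheorem15:
  fixes P :: "'s::finite \<Rightarrow> 's \<Rightarrow> real" and \<mu> :: "'s \<Rightarrow> real"
    and \<phi> :: "'s \<Rightarrow> real^('d::finite)" and \<gamma> \<alpha> \<eta>0 :: real
  assumes "0 \<le> \<gamma>" "\<gamma> < 1"
    and "markov_kernel P" "stationary_dist P \<mu>"
    and "\<forall>s. norm (\<phi> s) \<le> 1"
    and "lambda_min (TD_Sigma \<mu> \<phi>) > 0"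
    and "1/2 < \<alpha>" "\<alpha> < 1"
    and "0 < \<eta>0" "\<eta>0 < 1 / (2 * lambda_max (TD_Sigma \<mu> \<phi>))"
  shows "\<exists>C. \<forall>Y X :: 'd mat. \<forall>T::nat.
           pos_def Y \<longrightarrow> pos_semidef X
           \<longrightarrow> \<eta>0 *\<^sub>R (TD_A P \<mu> \<gamma> \<phi> ** X + X ** transpose (TD_A P \<mu> \<gamma> \<phi>)) = Y
           \<longrightarrow> 1 \<le> T \<longrightarrow>
           (let A = TD_A P \<mu> \<gamma> \<phi>;
                \<eta> = (\<lambda>k::nat. \<eta>0 * real k powr (-\<alpha>));
                Q = (\<lambda>t. mat_prod_range (\<lambda>k. mat 1 - \<eta> k *\<^sub>R A) t T);
                F = (real T powr (-\<alpha>)) *\<^sub>R (\<Sum>t\<in>{1..T}. Q t ** Y ** transpose (Q t)) - X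
            in spec_norm F \<le> C * real T powr (\<alpha> - 1) * spec_norm Y
             \<and> trace F \<le> C * real T powr (\<alpha> - 1) * trace Y)"
proof -
  let ?A = "TD_A P \<mu> \<gamma> \<phi>" and ?n = "real CARD('d)"
  obtain m where "0 < m" and coercive: "\<And>x. m * norm x ^ 2 \<le> x \<bullet> (?A *v x)"
    using TD_A_coercive[of \<gamma> P \<mu> \<phi>] assms by blast
  let ?M = "\<lambda>k. mat 1 - (\<eta>0 * real k powr (- \<alpha>)) *\<^sub>R ?A"
  obtain B where "0 \<le> B" and B: "\<And>X Y T. pos_semidef X
      \<Longrightarrow> \<eta>0 *\<^sub>R (?A ** X + X ** transpose ?A) = Y \<Longrightarrow> 1 \<le> T
      \<Longrightarrow> spec_norm (real T powr (- \<alpha>) *\<^sub>R sandwich_sum ?M Y T - X) \<le> B * real T powr (\<alpha> - 1) * spec_norm Y"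
    using lyapunov_sandwich_sum_deviation_bound[OF coercive \<open>0 < m\<close>, of \<eta>0 \<alpha>] assms by blast
  have "spec_norm F \<le> ?n ^ 3 * B * real T powr (\<alpha> - 1) * spec_norm Y
      \<and> trace F \<le> ?n ^ 3 * B * real T powr (\<alpha> - 1) * trace Y"
    if "pos_def Y" and F: "spec_norm F \<le> B * real T powr (\<alpha> - 1) * spec_norm Y" for F Y :: "'d mat" and T
  proof
    have "B * real T powr (\<alpha> - 1) * spec_norm Y \<le> ?n ^ 3 * (B * real T powr (\<alpha> - 1) * spec_norm Y)"
      using \<open>0 \<le> B\<close> spec_norm_nonneg[of Y] mult_right_mono[of 1 "?n ^ 3"] by simp
    with F show "spec_norm F \<le> ?n ^ 3 * B * real T powr (\<alpha> - 1) * spec_norm Y"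
      by (simp add: mult.assoc)
    show "trace F \<le> ?n ^ 3 * B * real T powr (\<alpha> - 1) * trace Y"
      using trace_le_of_spec_norm_le[OF pos_def_imp_pos_semidef[OF \<open>pos_def Y\<close>] _ F] \<open>0 \<le> B\<close>
      by (simp add: mult.assoc)
  qed
  then show ?thesis
    unfolding Let_def sandwich_sum_def[symmetric] using B by blast
qed

end
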